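(* Let $t\in\mathbb N$ and $N=\lvert t\rvert_{\mathtt{01}}$. Then for all real $\vartheta$ with $\lvert\vartheta\rvert\le\pi$, \[ \lvert\gamma_t(\vartheta)\rvert\le\Bigl(1-\frac{1}{128}\vartheta^2\Bigr)^{\lfloor N/2\rfloor}. \]
   Context: For $n\in\mathbb N=\{0,1,\dots\}$, $\lvert n\rvert_{\mathtt{01}}$ denotes the number of maximal blocks of $\mathtt 1$s in the binary expansion of $n$ (equivalently, the number of occurrences of $\mathtt{01}$ after padding with a leading $\mathtt 0$). Let $\mathsf r(n)$ be the number of (overlapping) occurrences of $\mathtt{11}$ in the binary expansion of $n$, $d(t,n)=\mathsf r(n+t)-\mathsf r(n)$, and $c_t(k)$ the asymptotic density (which exists) of $\{n\in\mathbb N:d(t,n)=k\}$, $k\in\mathbb Z$. Let $\gamma_t(\vartheta)=\sum_{k\in\mathbb Z}c_t(k)\exp(ik\vartheta)$. *)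

theory Defs
  imports "HOL-Analysis.Analysis"
begin

text \<open>Number of maximal blocks of 1s in binary expansion of n, i.e. occurrences of 01
  (reading from the most significant digit, after padding with a leading 0):
  positions j with digit j equal to 1 and digit j+1 equal to 0.\<close>
definition blocks01 :: "nat \<Rightarrow> nat" where
  "blocks01 n = card {j. \<not> bit n (Suc j) \<and> bit n j}"

definition r11 :: "nat \<Rightarrow> nat" where
  "r11 n = card {j. bit n (Suc j) \<and> bit n j}"

definition dd :: "nat \<Rightarrow> nat \<Rightarrow> int" where
  "dd t n = int (r11 (n + t)) - int (r11 n)"

text \<open>Asymptotic density of {n. d(t,n) = k} (its existence is a known fact).\<close>
definition cdens :: "nat \<Rightarrow> int \<Rightarrow> real" where
  "cdens t k = lim (\<lambda>M. real (card {n. n < M \<and> dd t n = k}) / real M)"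

definition gamma_t :: "nat \<Rightarrow> real \<Rightarrow> complex" where
  "gamma_t t \<theta> = infsum (\<lambda>k::int. complex_of_real (cdens t k) * exp (\<i> * of_int k * of_real \<theta>)) UNIV"

end

theory Submission
  imports Defs
begin

text \<open>Read n and n + t from the least significant digit. Then r11 (n + t) - r11 n is
  produced by a finite transducer whose state is the carry together with the last digits
  read, so the average of the phases e^(i \<theta> d(t, n)) over n < 2^K obeys a recursion
  along the digits of t. Whenever a window of four digits of t starts at a change of digit,
  two of the 16 digit paths through the window lead to the same state with phases differing
  by exactly 1 (a finite check over the windows and the states). Pairing them gains the
  factor |1 + e^(i \<theta>)| / 2 \<le> 1 - \<theta>^2 / 16 on two of the 16 paths, i.e. a factor
  1 - \<theta>^2 / 128 per window, and t contains at least \<lfloor>N / 2\<rfloor> disjoint such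
  windows. Finally, d(t, n) agrees with a 2^(K+1)-periodic function outside a set of density
  at most t / 2^K; this shows that the densities c_t(k) exist and that \<gamma>_t(\<theta>) is
  within 2 t / 2^K of the finite average.\<close>

section \<open>Phases\<close>

definition phase :: "real \<Rightarrow> int \<Rightarrow> complex" where
  "phase \<theta> k = exp (\<i> * of_int k * of_real \<theta>)"

lemma phase_add: "phase \<theta> (k + l) = phase \<theta> k * phase \<theta> l"
  unfolding phase_def by (simp add: distrib_right distrib_left exp_add)

lemma phase_0 [simp]: "phase \<theta> 0 = 1"
  by (simp add: phase_def)

lemma phase_eq_cis: "phase \<theta> k = cis (of_int k * \<theta>)"
  unfolding phase_def cis_conv_exp by (simp add: mult.commute mult.left_commute)

lemma norm_phase [simp]: "norm (phase \<theta> k) = 1"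
  by (simp add: phase_eq_cis)

lemma sin_ge_cubic:
  fixes y :: real
  assumes "0 \<le> y"
  shows "y - y ^ 3 / 6 \<le> sin y"
proof -
  have "(\<Sum>m<3. sin_coeff m * y ^ m) = y"
    by (simp add: numeral_3_eq_3 sin_coeff_def)
  moreover have "inverse (fact 3) * \<bar>y\<bar> ^ 3 = y ^ 3 / 6"
    using assms by (simp add: numeral_3_eq_3 field_simps)
  ultimately have "\<bar>sin y - y\<bar> \<le> y ^ 3 / 6"
    using Maclaurin_sin_bound[of y 3] by (simp only:)
  then show ?thesis by linarith
qed

lemma cos_le_one_minus_quarter_sq:
  fixes x :: real
  assumes "\<bar>x\<bar> \<le> 2"
  shows "cos x \<le> 1 - x\<^sup>2 / 4"
proof -
  define y where "y = \<bar>x\<bar> / 2"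
  have y: "0 \<le> y" "y \<le> 1" using assms by (auto simp: y_def)
  have "y ^ 3 \<le> y" using y by (simp add: power3_eq_cube mult_le_one mult_left_le_one_le)
  then have "5/6 * y \<le> sin y" using sin_ge_cubic[OF y(1)] by linarith
  then have "(5/6 * y)\<^sup>2 \<le> (sin y)\<^sup>2" using y(1) by (intro power_mono) auto
  moreover have "cos x = 1 - 2 * (sin y)\<^sup>2"
    using cos_double_sin[of y] by (simp add: y_def)
  moreover have "(5/6 * y)\<^sup>2 = 25/36 * y\<^sup>2" "y\<^sup>2 = x\<^sup>2 / 4"
    by (simp_all add: y_def power_mult_distrib power_divide)
  moreover have "0 \<le> x\<^sup>2" by simp
  ultimately show ?thesis by linarith
qed

lemma norm_one_plus_phase_one_le:
  assumes "\<bar>\<theta>\<bar> \<le> pi"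
  shows "norm (1 + phase \<theta> 1) \<le> 2 - \<theta>\<^sup>2 / 8"
proof -
  have cos_half: "0 \<le> cos (\<theta>/2)" using assms by (intro cos_ge_zero) auto
  have "(1 + cos \<theta>)\<^sup>2 + (sin \<theta>)\<^sup>2 = 2 * (1 + cos \<theta>)"
    using sin_cos_squared_add[of \<theta>] by (simp add: power2_eq_square algebra_simps)
  also have "\<dots> = (2 * cos (\<theta>/2))\<^sup>2"
    using cos_double_cos[of "\<theta>/2"] by (simp add: power2_eq_square)
  finally have "(1 + cos \<theta>)\<^sup>2 + (sin \<theta>)\<^sup>2 = (2 * cos (\<theta>/2))\<^sup>2" .
  then have "norm (1 + phase \<theta> 1) = sqrt ((2 * cos (\<theta>/2))\<^sup>2)"
    by (simp add: phase_eq_cis cmod_def)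
  also have "\<dots> = 2 * cos (\<theta>/2)"
    using cos_half by (subst real_sqrt_abs) simp
  also have "\<dots> \<le> 2 - \<theta>\<^sup>2 / 8"
    using cos_le_one_minus_quarter_sq[of "\<theta>/2"] assms pi_less_4 by (simp add: power_divide)
  finally show ?thesis .
qed

lemma power2_le_16_if_abs_le_pi:
  fixes \<theta> :: real
  assumes "\<bar>\<theta>\<bar> \<le> pi"
  shows "\<theta>\<^sup>2 \<le> 16"
proof -
  have "\<bar>\<theta>\<bar>\<^sup>2 \<le> 4\<^sup>2"
    using assms pi_less_4 by (intro power_mono) auto
  then show ?thesis by simp
qed

lemma norm_sum_phase_collision_le:
  fixes X :: "'a \<Rightarrow> complex" and \<phi> :: "'a \<Rightarrow> int"
  assumes "finite A" "p \<in> A" "q \<in> A" "p \<noteq> q"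
    and collision: "X p = X q" "\<phi> q = \<phi> p + 1"
    and bound: "\<And>a. a \<in> A \<Longrightarrow> norm (X a) \<le> M"
    and "\<bar>\<theta>\<bar> \<le> pi"
  shows "norm (\<Sum>a\<in>A. phase \<theta> (\<phi> a) * X a) \<le> (card A - \<theta>\<^sup>2 / 8) * M"
proof -
  let ?f = "\<lambda>a. phase \<theta> (\<phi> a) * X a"
  let ?R = "A - {p, q}"
  have "?f p + ?f q = phase \<theta> (\<phi> p) * (1 + phase \<theta> 1) * X p"
    using collision by (simp add: phase_add algebra_simps)
  then have "norm (?f p + ?f q) = norm (1 + phase \<theta> 1) * norm (X p)"
    by (simp add: norm_mult)
  also have "\<dots> \<le> (2 - \<theta>\<^sup>2 / 8) * M"
    using norm_one_plus_phase_one_le[OF \<open>\<bar>\<theta>\<bar> \<le> pi\<close>] bound[OF \<open>p \<in> A\<close>]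
      power2_le_16_if_abs_le_pi[OF \<open>\<bar>\<theta>\<bar> \<le> pi\<close>]
    by (intro mult_mono) auto
  finally have pair: "norm (?f p + ?f q) \<le> (2 - \<theta>\<^sup>2 / 8) * M" .
  have "norm (\<Sum>a\<in>?R. ?f a) \<le> (\<Sum>a\<in>?R. M)"
    by (rule order_trans[OF norm_sum sum_mono]) (simp add: norm_mult bound)
  also have "\<dots> = (real (card A) - 2) * M"
  proof -
    have "card {p, q} = 2" "{p, q} \<subseteq> A" using assms(2-4) by auto
    then have "card ?R = card A - 2" "2 \<le> card A"
      using card_mono[OF \<open>finite A\<close>, of "{p, q}"] by (simp_all add: card_Diff_subset)
    then show ?thesis by (simp add: of_nat_diff)
  qed
  finally have rest: "norm (\<Sum>a\<in>?R. ?f a) \<le> (real (card A) - 2) * M" .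
  have "A = insert p (insert q ?R)" using assms(2,3) by auto
  then have "(\<Sum>a\<in>A. ?f a) = (\<Sum>a\<in>insert p (insert q ?R). ?f a)" by simp
  also have "\<dots> = (?f p + ?f q) + (\<Sum>a\<in>?R. ?f a)"
    using assms(1,4) by (simp add: add.assoc)
  finally have "norm (\<Sum>a\<in>A. ?f a) \<le> norm (?f p + ?f q) + norm (\<Sum>a\<in>?R. ?f a)"
    by (simp add: norm_triangle_ineq)
  also have "\<dots> \<le> (card A - \<theta>\<^sup>2 / 8) * M"
    using pair rest by (simp add: algebra_simps)
  finally show ?thesis .
qed

section \<open>Densities of almost periodic sets\<close>

definition count_below :: "(nat \<Rightarrow> bool) \<Rightarrow> nat \<Rightarrow> nat" where
  "count_below P M = card {n. n < M \<and> P n}"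

lemma count_below_le: "count_below P M \<le> M"
  unfolding count_below_def using card_mono[of "{..<M}" "{n. n < M \<and> P n}"] by auto

lemma count_below_mono: "(\<And>n. n < M \<Longrightarrow> P n \<Longrightarrow> Q n) \<Longrightarrow> count_below P M \<le> count_below Q M"
  unfolding count_below_def by (rule card_mono) auto

lemma count_below_disj_le: "count_below (\<lambda>n. P n \<or> Q n) M \<le> count_below P M + count_below Q M"
proof -
  have "{n. n < M \<and> (P n \<or> Q n)} = {n. n < M \<and> P n} \<union> {n. n < M \<and> Q n}" by auto
  then show ?thesis unfolding count_below_def by (metis card_Un_le)
qed

lemma sum_count_below_eq:
  assumes "finite F"
  shows "(\<Sum>k\<in>F. count_below (\<lambda>n. P n \<and> h n = k) M) = count_below (\<lambda>n. P n \<and> h n \<in> F) M"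
proof -
  have eq: "{n. n < M \<and> P n \<and> h n \<in> F} = (\<Union>k\<in>F. {n. n < M \<and> P n \<and> h n = k})" by auto
  show ?thesis
    unfolding count_below_def eq using assms by (subst card_UN_disjoint) auto
qed

lemma count_below_periodic:
  assumes periodic: "\<And>n. P (n mod q) = P n"
  shows "count_below P (k * q + r) = k * count_below P q + count_below P r"
proof (induction k)
  case (Suc k)
  let ?x = "k * q + r"
  have shift: "P (n + q) = P n" for n
    using periodic[of "n + q"] periodic[of n] by simp
  have split: "{n. n < q + ?x \<and> P n} = {n. n < q \<and> P n} \<union> (\<lambda>n. n + q) ` {n. n < ?x \<and> P n}"
  proof (intro set_eqI iffI)
    fix n assume n: "n \<in> {n. n < q + ?x \<and> P n}"
    show "n \<in> {n. n < q \<and> P n} \<union> (\<lambda>n. n + q) ` {n. n < ?x \<and> P n}"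
    proof (cases "n < q")
      case False
      then have "n = (n - q) + q" "n - q \<in> {n. n < ?x \<and> P n}" using n shift[of "n - q"] by auto
      then show ?thesis by blast
    qed (use n in auto)
  qed (auto simp: shift)
  have "count_below P (q + ?x) = count_below P q + count_below P ?x"
    unfolding count_below_def split by (subst card_Un_disjoint) (auto simp: card_image)
  then show ?case using Suc.IH by (simp add: add.assoc)
qed simp

lemma tendsto_count_below_periodic:
  assumes "0 < q" and periodic: "\<And>n. P (n mod q) = P n"
  shows "(\<lambda>M. count_below P M / M) \<longlonglongrightarrow> count_below P q / q"
proof -
  let ?C = "real (count_below P q)"
  have bound: "\<bar>count_below P M / M - ?C / q\<bar> \<le> q / M" if "0 < M" for M
  proof -
    define r where "r = M mod q"
    define R where "R = real (count_below P r)"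
    have "r < q" unfolding r_def using assms(1) by simp
    have M_eq: "real M = real (M div q) * q + r"
      and count_eq: "count_below P M = real (M div q) * ?C + R"
      using count_below_periodic[where P = P and q = q and k = "M div q" and r = r, OF periodic]
      unfolding r_def R_def
      by (simp_all flip: of_nat_mult of_nat_add)
    have "q * count_below P M - ?C * M = q * R - ?C * r"
      by (simp add: M_eq count_eq algebra_simps)
    then have "count_below P M / M - ?C / q = (q * R - ?C * r) / (M * q)"
      using assms(1) that by (simp add: field_simps)
    moreover have "\<bar>q * R - ?C * r\<bar> \<le> q * q"
    proof -
      have "R \<le> q" "?C \<le> q" "real r \<le> q"
        using count_below_le[of P r] count_below_le[of P q] \<open>r < q\<close> by (simp_all add: R_def)
      then have "q * R \<le> q * q" "?C * r \<le> q * q"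
        by (simp_all add: mult_left_mono mult_mono)
      moreover have "0 \<le> q * R" "0 \<le> ?C * r" by (simp_all add: R_def)
      ultimately show ?thesis by linarith
    qed
    ultimately show ?thesis
      using assms(1) that by (simp add: abs_divide divide_le_eq field_simps)
  qed
  have "(\<lambda>M. count_below P M / M - ?C / q) \<longlonglongrightarrow> 0"
  proof (rule Lim_null_comparison)
    show "\<forall>\<^sub>F M in sequentially. norm (count_below P M / M - ?C / q) \<le> q / M"
      using bound by (auto intro!: eventually_sequentiallyI[of 1])
  qed (rule lim_const_over_n)
  then show ?thesis by (rule LIM_zero_cancel)
qed

lemma convergent_if_sandwiched:
  fixes x :: "nat \<Rightarrow> real"
  assumes "\<And>\<eta>. 0 < \<eta> \<Longrightarrow> \<exists>y z D. convergent y \<and> z \<longlonglongrightarrow> D \<and> D < \<eta> \<and> (\<forall>M. y M \<le> x M \<and> x M \<le> y M + z M)"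
  shows "convergent x"
proof -
  have "Cauchy x"
  proof (rule metric_CauchyI)
    fix \<epsilon> :: real
    assume "0 < \<epsilon>"
    then obtain y z D where "convergent y" "z \<longlonglongrightarrow> D" "D < \<epsilon> / 3"
        and sandwich: "\<forall>M. y M \<le> x M \<and> x M \<le> y M + z M"
      using assms[of "\<epsilon> / 3"] by auto
    from \<open>convergent y\<close> have "Cauchy y" by (rule convergent_Cauchy)
    then obtain N1 where N1: "\<forall>m\<ge>N1. \<forall>n\<ge>N1. dist (y m) (y n) < \<epsilon> / 3"
      using \<open>0 < \<epsilon>\<close> by (meson metric_CauchyD zero_less_divide_iff zero_less_numeral)
    from \<open>z \<longlonglongrightarrow> D\<close> \<open>D < \<epsilon> / 3\<close> have "eventually (\<lambda>M. z M < \<epsilon> / 3) sequentially"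
      by (rule order_tendstoD)
    then obtain N2 where N2: "\<forall>M\<ge>N2. z M < \<epsilon> / 3"
      by (auto simp: eventually_sequentially)
    have "dist (x m) (x n) < \<epsilon>" if "max N1 N2 \<le> m" "max N1 N2 \<le> n" for m n
    proof -
      have "dist (y m) (y n) < \<epsilon> / 3" "z m < \<epsilon> / 3" "z n < \<epsilon> / 3"
        using N1 N2 that by auto
      moreover have "y m \<le> x m" "x m \<le> y m + z m" "y n \<le> x n" "x n \<le> y n + z n"
        using sandwich by auto
      ultimately show ?thesis unfolding dist_real_def by linarith
    qed
    then show "\<exists>N. \<forall>m\<ge>N. \<forall>n\<ge>N. dist (x m) (x n) < \<epsilon>" by blast
  qed
  then show ?thesis by (simp add: Cauchy_convergent_iff)
qed

lemma convergent_density_if_periodic_approx: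
  assumes "\<And>\<eta>. 0 < \<eta> \<Longrightarrow> \<exists>q Q B. 0 < q \<and> (\<forall>n. Q (n mod q) = Q n \<and> B (n mod q) = B n)
      \<and> (\<forall>n. \<not> B n \<longrightarrow> (P n \<longleftrightarrow> Q n)) \<and> count_below B q / q < \<eta>"
  shows "convergent (\<lambda>M. count_below P M / M)"
proof (rule convergent_if_sandwiched)
  fix \<eta> :: real
  assume "0 < \<eta>"
  then obtain q Q B where "0 < q" and periodic: "\<forall>n. Q (n mod q) = Q n \<and> B (n mod q) = B n"
      and agree: "\<forall>n. \<not> B n \<longrightarrow> (P n \<longleftrightarrow> Q n)" and small: "count_below B q / q < \<eta>"
    using assms by metis
  let ?y = "\<lambda>M. count_below (\<lambda>n. \<not> B n \<and> Q n) M / M"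
  let ?z = "\<lambda>M. count_below B M / M"
  have "convergent ?y"
    using tendsto_count_below_periodic[OF \<open>0 < q\<close>, of "\<lambda>n. \<not> B n \<and> Q n"] periodic
    by (auto simp: convergent_def)
  moreover have "?z \<longlonglongrightarrow> count_below B q / q"
    using \<open>0 < q\<close> periodic by (simp add: tendsto_count_below_periodic)
  moreover have "?y M \<le> count_below P M / M \<and> count_below P M / M \<le> ?y M + ?z M" for M
  proof -
    have "count_below (\<lambda>n. \<not> B n \<and> Q n) M \<le> count_below P M"
      using agree by (intro count_below_mono) auto
    moreover have "count_below P M \<le> count_below (\<lambda>n. \<not> B n \<and> Q n) M + count_below B M"
      using agree by (intro order_trans[OF count_below_mono count_below_disj_le]) auto
    ultimately show ?thesis
      by (simp add: divide_right_mono flip: add_divide_distrib)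
  qed
  ultimately show "\<exists>y z D. convergent y \<and> z \<longlonglongrightarrow> D \<and> D < \<eta> \<and>
      (\<forall>M. y M \<le> count_below P M / M \<and> count_below P M / M \<le> y M + z M)"
    using small by blast
qed

lemma sum_abs_count_below_diff_le:
  fixes f g :: "nat \<Rightarrow> 'a"
  assumes "finite F" and agree: "\<And>n. \<not> B n \<Longrightarrow> f n = g n"
  shows "(\<Sum>k\<in>F. \<bar>real (count_below (\<lambda>n. f n = k) M) - count_below (\<lambda>n. g n = k) M\<bar>)
    \<le> 2 * count_below B M"
proof -
  have "\<bar>real (count_below (\<lambda>n. f n = k) M) - count_below (\<lambda>n. g n = k) M\<bar>
      \<le> count_below (\<lambda>n. B n \<and> f n = k) M + count_below (\<lambda>n. B n \<and> g n = k) M" for k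
  proof -
    have "count_below (\<lambda>n. f n = k) M
        \<le> count_below (\<lambda>n. g n = k) M + count_below (\<lambda>n. B n \<and> f n = k) M"
      using agree by (intro order_trans[OF count_below_mono count_below_disj_le]) auto
    moreover have "count_below (\<lambda>n. g n = k) M
        \<le> count_below (\<lambda>n. f n = k) M + count_below (\<lambda>n. B n \<and> g n = k) M"
      using agree by (intro order_trans[OF count_below_mono count_below_disj_le]) auto
    ultimately show ?thesis by linarith
  qed
  then have "(\<Sum>k\<in>F. \<bar>real (count_below (\<lambda>n. f n = k) M) - count_below (\<lambda>n. g n = k) M\<bar>)
      \<le> (\<Sum>k\<in>F. real (count_below (\<lambda>n. B n \<and> f n = k) M + count_below (\<lambda>n. B n \<and> g n = k) M))"
    by (intro sum_mono) simp
  also have "\<dots> = count_below (\<lambda>n. B n \<and> f n \<in> F) M + count_below (\<lambda>n. B n \<and> g n \<in> F) M"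
    by (simp only: of_nat_sum [symmetric] sum.distrib sum_count_below_eq[OF assms(1)])
  also have "\<dots> \<le> 2 * count_below B M"
    using count_below_mono[of M "\<lambda>n. B n \<and> f n \<in> F" B] count_below_mono[of M "\<lambda>n. B n \<and> g n \<in> F" B]
    by simp
  finally show ?thesis .
qed

lemma sum_abs_density_diff_le:
  fixes f g :: "nat \<Rightarrow> 'a" and c d :: "'a \<Rightarrow> real"
  assumes "finite F" and agree: "\<And>n. \<not> B n \<Longrightarrow> f n = g n"
    and f_density: "\<And>k. (\<lambda>M. count_below (\<lambda>n. f n = k) M / M) \<longlonglongrightarrow> c k"
    and g_density: "\<And>k. (\<lambda>M. count_below (\<lambda>n. g n = k) M / M) \<longlonglongrightarrow> d k"
    and B_density: "(\<lambda>M. count_below B M / M) \<longlonglongrightarrow> \<delta>"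
  shows "(\<Sum>k\<in>F. \<bar>c k - d k\<bar>) \<le> 2 * \<delta>"
proof (rule LIMSEQ_le)
  show "(\<lambda>M. \<Sum>k\<in>F. \<bar>count_below (\<lambda>n. f n = k) M / M - count_below (\<lambda>n. g n = k) M / M\<bar>)
      \<longlonglongrightarrow> (\<Sum>k\<in>F. \<bar>c k - d k\<bar>)"
    by (intro tendsto_sum tendsto_rabs tendsto_diff f_density g_density)
  show "(\<lambda>M. 2 * (count_below B M / M)) \<longlonglongrightarrow> 2 * \<delta>"
    by (intro tendsto_mult_left B_density)
  have "(\<Sum>k\<in>F. \<bar>count_below (\<lambda>n. f n = k) M / M - count_below (\<lambda>n. g n = k) M / M\<bar>)
      \<le> 2 * (count_below B M / M)" for M
  proof -
    have "(\<Sum>k\<in>F. \<bar>count_below (\<lambda>n. f n = k) M / M - count_below (\<lambda>n. g n = k) M / M\<bar>)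
        = (\<Sum>k\<in>F. \<bar>real (count_below (\<lambda>n. f n = k) M) - count_below (\<lambda>n. g n = k) M\<bar>) / M"
      by (simp add: sum_divide_distrib abs_divide flip: diff_divide_distrib)
    also have "\<dots> \<le> 2 * count_below B M / M"
      by (intro divide_right_mono sum_abs_count_below_diff_le[where B = B, OF assms(1) agree])
        simp_all
    finally show ?thesis by simp
  qed
  then show "\<exists>N. \<forall>M\<ge>N. (\<Sum>k\<in>F. \<bar>count_below (\<lambda>n. f n = k) M / M - count_below (\<lambda>n. g n = k) M / M\<bar>)
      \<le> 2 * (count_below B M / M)"
    by blast
qed

lemma has_sum_count_below_phase:
  fixes g :: "nat \<Rightarrow> int"
  shows "((\<lambda>k. complex_of_real (count_below (\<lambda>n. g n = k) q / q) * phase \<theta> k)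
    has_sum (\<Sum>n<q. phase \<theta> (g n)) / q) UNIV"
proof (rule has_sum_finite_neutralI)
  let ?S = "g ` {..<q}"
  show "finite ?S" by simp
  show "complex_of_real (count_below (\<lambda>n. g n = k) q / q) * phase \<theta> k = 0" if "k \<in> UNIV - ?S" for k
  proof -
    have "{n. n < q \<and> g n = k} = {}" using that by auto
    then show ?thesis by (simp add: count_below_def)
  qed
  have summand: "complex_of_real (count_below (\<lambda>n. g n = k) q / q) * phase \<theta> k
      = (\<Sum>n\<in>{n \<in> {..<q}. g n = k}. phase \<theta> (g n)) / q" for k
  proof -
    have "(\<Sum>n\<in>{n \<in> {..<q}. g n = k}. phase \<theta> (g n))
        = of_nat (card {n \<in> {..<q}. g n = k}) * phase \<theta> k"
      by simp
    then show ?thesis by (simp add: count_below_def conj_commute)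
  qed
  have "(\<Sum>k\<in>?S. complex_of_real (count_below (\<lambda>n. g n = k) q / q) * phase \<theta> k)
      = (\<Sum>k\<in>?S. \<Sum>n\<in>{n \<in> {..<q}. g n = k}. phase \<theta> (g n)) / q"
    unfolding summand sum_divide_distrib ..
  also have "\<dots> = (\<Sum>n<q. phase \<theta> (g n)) / q"
    using sum.group[of "{..<q}" ?S g "\<lambda>n. phase \<theta> (g n)"] by simp
  finally show "(\<Sum>n<q. phase \<theta> (g n)) / q
      = (\<Sum>k\<in>?S. complex_of_real (count_below (\<lambda>n. g n = k) q / q) * phase \<theta> k)"
    by simp
qed simp

lemma norm_infsum_density_phase_diff_le:
  fixes f g :: "nat \<Rightarrow> int" and c :: "int \<Rightarrow> real"
  assumes "0 < q" and periodic: "\<And>n. g (n mod q) = g n" "\<And>n. B (n mod q) = B n"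
    and agree: "\<And>n. \<not> B n \<Longrightarrow> f n = g n"
    and density: "\<And>k. (\<lambda>M. count_below (\<lambda>n. f n = k) M / M) \<longlonglongrightarrow> c k"
  shows "norm ((\<Sum>\<^sub>\<infinity>k. complex_of_real (c k) * phase \<theta> k) - (\<Sum>n<q. phase \<theta> (g n)) / q)
    \<le> 2 * count_below B q / q"
proof -
  define d where "d k = count_below (\<lambda>n. g n = k) q / q" for k
  define \<delta> where "\<delta> = count_below B q / q"
  have d_density: "(\<lambda>M. count_below (\<lambda>n. g n = k) M / M) \<longlonglongrightarrow> d k" for k
    unfolding d_def using \<open>0 < q\<close> periodic(1) by (simp add: tendsto_count_below_periodic)
  have B_density: "(\<lambda>M. count_below B M / M) \<longlonglongrightarrow> \<delta>"
    unfolding \<delta>_def using \<open>0 < q\<close> periodic(2) by (simp add: tendsto_count_below_periodic)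
  have finite_sums: "(\<Sum>k\<in>F. \<bar>c k - d k\<bar>) \<le> 2 * \<delta>" if "finite F" for F
    using that agree density d_density B_density by (rule sum_abs_density_diff_le)
  have abs_summable: "(\<lambda>k. \<bar>c k - d k\<bar>) summable_on UNIV"
    using finite_sums by (intro nonneg_bdd_above_summable_on bdd_aboveI[of _ "2 * \<delta>"]) auto
  have norm_eq: "norm (complex_of_real (c k - d k) * phase \<theta> k) = \<bar>c k - d k\<bar>" for k
    by (simp only: norm_mult norm_of_real norm_phase mult_1_right)
  have diff_summable: "(\<lambda>k. norm (complex_of_real (c k - d k) * phase \<theta> k)) summable_on UNIV"
    unfolding norm_eq by (rule abs_summable)
  define e where "e = (\<Sum>\<^sub>\<infinity>k. complex_of_real (c k - d k) * phase \<theta> k)"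
  have "((\<lambda>k. complex_of_real (c k - d k) * phase \<theta> k) has_sum e) UNIV"
    unfolding e_def using abs_summable_summable[OF diff_summable] by (rule has_sum_infsum)
  from has_sum_add[OF this has_sum_count_below_phase[of g q \<theta>, folded d_def]]
  have "((\<lambda>k. complex_of_real (c k) * phase \<theta> k) has_sum e + (\<Sum>n<q. phase \<theta> (g n)) / q) UNIV"
    by (simp add: algebra_simps)
  then have "(\<Sum>\<^sub>\<infinity>k. complex_of_real (c k) * phase \<theta> k) = e + (\<Sum>n<q. phase \<theta> (g n)) / q"
    by (rule infsumI)
  moreover have "norm e \<le> 2 * \<delta>"
  proof -
    have "norm e \<le> (\<Sum>\<^sub>\<infinity>k. norm (complex_of_real (c k - d k) * phase \<theta> k))"
      unfolding e_def by (rule norm_infsum_bound[OF diff_summable])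
    also have "\<dots> = (\<Sum>\<^sub>\<infinity>k. \<bar>c k - d k\<bar>)"
      unfolding norm_eq ..
    also have "\<dots> \<le> 2 * \<delta>"
      using abs_summable finite_sums by (rule infsum_le_finite_sums)
    finally show ?thesis .
  qed
  ultimately show ?thesis
    unfolding \<delta>_def by simp
qed

section \<open>Binary digits\<close>

lemma bit_nat_imp_less: "bit (n::nat) j \<Longrightarrow> j < n"
proof (rule ccontr)
  assume "bit n j" "\<not> j < n"
  then have "n < 2 ^ j" using less_exp[of j] by linarith
  with \<open>bit n j\<close> show False by (simp add: bit_nat_def)
qed

lemma card_bit_pairs_half:
  fixes n :: nat
  assumes "\<And>x y. Q x y \<Longrightarrow> x \<or> y"
  shows "card {j. Q (bit n (Suc j)) (bit n j)}
    = card {j. Q (bit (n div 2) (Suc j)) (bit (n div 2) j)} + of_bool (Q (odd (n div 2)) (odd n))"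
proof -
  let ?S = "\<lambda>m::nat. {j. Q (bit m (Suc j)) (bit m j)}"
  have finite: "finite (?S m)" for m
    by (rule finite_subset[of _ "{..<m}"]) (auto dest!: assms dest: bit_nat_imp_less Suc_lessD)
  have "?S n = (if Q (odd (n div 2)) (odd n) then {0} else {}) \<union> Suc ` ?S (n div 2)"
  proof (intro set_eqI)
    fix j show "j \<in> ?S n \<longleftrightarrow> j \<in> (if Q (odd (n div 2)) (odd n) then {0} else {}) \<union> Suc ` ?S (n div 2)"
      by (cases j) (auto simp: bit_Suc bit_0)
  qed
  then show ?thesis
    by (simp add: card_Un_disjoint card_image finite)
qed

lemma r11_half: "r11 n = r11 (n div 2) + of_bool (odd n \<and> odd (n div 2))"
  unfolding r11_def by (subst card_bit_pairs_half) auto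

lemma blocks01_half: "blocks01 n = blocks01 (n div 2) + of_bool (odd n \<and> even (n div 2))"
  unfolding blocks01_def by (subst card_bit_pairs_half) auto

definition bit_changes :: "nat \<Rightarrow> nat" where
  "bit_changes n = card {j. bit n (Suc j) \<noteq> bit n j}"

lemma bit_changes_half: "bit_changes n = bit_changes (n div 2) + of_bool (odd n \<noteq> odd (n div 2))"
  unfolding bit_changes_def by (subst card_bit_pairs_half) auto

lemma bit_changes_blocks01: "bit_changes n + of_bool (odd n) = 2 * blocks01 n"
proof (induction n rule: less_induct)
  case (less n)
  show ?case
  proof (cases "n = 0")
    case True
    then show ?thesis by (simp add: bit_changes_def blocks01_def)
  next
    case False
    then have "bit_changes (n div 2) + of_bool (odd (n div 2)) = 2 * blocks01 (n div 2)"
      by (intro less.IH) simp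
    then show ?thesis
      by (subst bit_changes_half, subst blocks01_half) auto
  qed
qed

lemma bit_changes_le_div16: "bit_changes n \<le> 4 + bit_changes (n div 16)"
proof -
  have step: "bit_changes m \<le> Suc (bit_changes (m div 2))" for m
    by (subst bit_changes_half) simp
  have "bit_changes n \<le> 4 + bit_changes (n div 2 div 2 div 2 div 2)"
    using step[of n] step[of "n div 2"] step[of "n div 2 div 2"] step[of "n div 2 div 2 div 2"]
    by linarith
  also have "n div 2 div 2 div 2 div 2 = n div 16"
    by (simp add: div_mult2_eq)
  finally show ?thesis .
qed

function window_count :: "nat \<Rightarrow> nat \<Rightarrow> nat" where
  "window_count K u =
    (if K < 4 then 0
     else if odd u \<noteq> odd (u div 2) then Suc (window_count (K - 4) (u div 16))
     else window_count (K - 1) (u div 2))"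
  by auto
termination by (relation "Wellfounded.measure fst") auto

declare window_count.simps [simp del]

lemma bit_changes_le_window_count: "16 * u < 2 ^ K \<Longrightarrow> bit_changes u \<le> 4 * window_count K u"
proof (induction K u rule: window_count.induct)
  case (1 K u)
  show ?case
  proof (cases "K < 4")
    case True
    then have "(2::nat) ^ K < 2 ^ 4" by (intro power_strict_increasing) auto
    then have "u = 0" using "1.prems" by simp
    then show ?thesis by (simp add: bit_changes_def)
  next
    case K: False
    then obtain L where "K = L + 4"
      by (metis add.commute le_add_diff_inverse not_less)
    then have pow: "(2::nat) ^ K = 16 * 2 ^ (K - 4)" "(2::nat) ^ K = 2 * 2 ^ (K - 1)"
      by (simp_all add: power_add)
    show ?thesis
    proof (cases "odd u \<noteq> odd (u div 2)")
      case True
      have "16 * (u div 16) < 2 ^ (K - 4)" using "1.prems" pow by linarith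
      then have "bit_changes (u div 16) \<le> 4 * window_count (K - 4) (u div 16)"
        using "1.IH"(1) K True by blast
      then show ?thesis
        using bit_changes_le_div16[of u] K True by (simp add: window_count.simps)
    next
      case False
      have "16 * (u div 2) < 2 ^ (K - 1)" using "1.prems" pow by linarith
      then have "bit_changes (u div 2) \<le> 4 * window_count (K - 1) (u div 2)"
        using "1.IH"(2) K False by blast
      then show ?thesis
        using bit_changes_half[of u] K False by (simp add: window_count.simps)
    qed
  qed
qed

lemma blocks01_div2_le_window_count:
  assumes "16 * t < 2 ^ K"
  shows "blocks01 t div 2 \<le> window_count K t"
proof -
  have "2 * blocks01 t \<le> 4 * window_count K t + 1"
    using bit_changes_blocks01[of t] bit_changes_le_window_count[OF assms]
    by (cases "odd t") simp_all
  then show ?thesis by presburger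
qed

section \<open>A digit transducer for r11 (n + t) - r11 n\<close>

text \<open>For digits a, b \<le> 1 this is r11 (2 (n + t) + a) - r11 (2 n + b): the digits a and b
  already read below n + t and n still contribute to the blocks 11 at the bottom.\<close>
definition r11_diff :: "nat \<Rightarrow> nat \<Rightarrow> nat \<Rightarrow> nat \<Rightarrow> int" where
  "r11_diff t a b n =
    (int (r11 (n + t)) + int a * of_bool (odd (n + t))) - (int (r11 n) + int b * of_bool (odd n))"

lemma dd_eq_r11_diff: "dd t n = r11_diff t 0 0 n"
  by (simp add: dd_def r11_diff_def)

lemma r11_double_plus:
  assumes "r \<le> 1"
  shows "int (r11 (2 * y + r)) + int a * of_bool (odd (2 * y + r))
    = int (r11 y) + int r * of_bool (odd y) + int a * int r"
  using r11_half[of "2 * y + r"] assms by (cases r) auto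

lemma r11_diff_double_plus:
  assumes "e \<le> 1"
  shows "r11_diff t a b (2 * m + e) =
    r11_diff ((t + e) div 2) ((t + e) mod 2) e m + (int a * int ((t + e) mod 2) - int b * int e)"
proof -
  have "2 * m + e + t = 2 * (m + (t + e) div 2) + (t + e) mod 2" by simp
  then show ?thesis
    unfolding r11_diff_def
    using r11_double_plus[of "(t + e) mod 2" "m + (t + e) div 2" a]
      r11_double_plus[OF assms, of m b]
    by (simp add: algebra_simps)
qed

lemma sum_lessThan_double:
  fixes f :: "nat \<Rightarrow> 'a::comm_monoid_add"
  shows "(\<Sum>n<2 * M. f n) = (\<Sum>m<M. f (2 * m) + f (2 * m + 1))"
  by (induction M) (auto simp: numeral_2_eq_2 add.assoc)

lemma sum_lessThan_2:
  fixes f :: "nat \<Rightarrow> 'a::comm_monoid_add"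
  shows "(\<Sum>e<2. f e) = f 0 + f 1"
  by (simp add: numeral_2_eq_2)

definition phase_avg :: "real \<Rightarrow> nat \<Rightarrow> nat \<Rightarrow> nat \<Rightarrow> nat \<Rightarrow> complex" where
  "phase_avg \<theta> K t a b = (\<Sum>n<2 ^ K. phase \<theta> (r11_diff t a b n)) / 2 ^ K"

lemma phase_avg_Suc:
  "phase_avg \<theta> (Suc K) t a b =
    (\<Sum>e<2. phase \<theta> (int a * int ((t + e) mod 2) - int b * int e)
       * phase_avg \<theta> K ((t + e) div 2) ((t + e) mod 2) e) / 2"
proof -
  let ?w = "\<lambda>e. phase \<theta> (int a * int ((t + e) mod 2) - int b * int e)"
  let ?h = "\<lambda>e m. phase \<theta> (r11_diff ((t + e) div 2) ((t + e) mod 2) e m)"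
  have "(\<Sum>n<2 ^ Suc K. phase \<theta> (r11_diff t a b n))
      = (\<Sum>m<2 ^ K. phase \<theta> (r11_diff t a b (2 * m)) + phase \<theta> (r11_diff t a b (2 * m + 1)))"
    using sum_lessThan_double[of _ "2 ^ K"] by simp
  also have "\<dots> = (\<Sum>m<2 ^ K. ?w 0 * ?h 0 m + ?w 1 * ?h 1 m)"
    using r11_diff_double_plus[of 0 t a b] r11_diff_double_plus[of 1 t a b]
    by (simp add: phase_add mult.commute)
  also have "\<dots> = ?w 0 * (\<Sum>m<2 ^ K. ?h 0 m) + ?w 1 * (\<Sum>m<2 ^ K. ?h 1 m)"
    by (simp add: sum.distrib sum_distrib_left)
  finally show ?thesis
    unfolding phase_avg_def sum_lessThan_2 by (simp add: field_simps)
qed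

text \<open>A state (c, a, b) holds the carry c into the unread digits of t and the digits a, b
  last read from n + t and n.\<close>
type_synonym digit_state = "nat \<times> nat \<times> nat"

fun state_step :: "nat \<Rightarrow> digit_state \<Rightarrow> nat \<Rightarrow> digit_state" where
  "state_step d (c, a, b) e = ((d + c + e) div 2, (d + c + e) mod 2, e)"

fun state_phase :: "nat \<Rightarrow> digit_state \<Rightarrow> nat \<Rightarrow> int" where
  "state_phase d (c, a, b) e = int a * int ((d + c + e) mod 2) - int b * int e"

fun state_avg :: "real \<Rightarrow> nat \<Rightarrow> nat \<Rightarrow> digit_state \<Rightarrow> complex" where
  "state_avg \<theta> K u (c, a, b) = phase_avg \<theta> K (u + c) a b"

fun binary_state :: "digit_state \<Rightarrow> bool" where
  "binary_state (c, a, b) \<longleftrightarrow> c \<le> 1 \<and> a \<le> 1 \<and> b \<le> 1"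

lemma state_avg_Suc:
  "state_avg \<theta> (Suc K) u s =
    (\<Sum>e<2. phase \<theta> (state_phase (u mod 2) s e)
      * state_avg \<theta> K (u div 2) (state_step (u mod 2) s e)) / 2"
proof -
  obtain c a b where s: "s = (c, a, b)" by (cases s)
  have "(u + c + e) mod 2 = (u mod 2 + c + e) mod 2" for e
    by (simp add: add.assoc mod_add_left_eq)
  moreover have "(u + c + e) div 2 = u div 2 + (u mod 2 + c + e) div 2" for e
  proof -
    have "u + c + e = (u mod 2 + c + e) + 2 * (u div 2)" by simp
    then show ?thesis by (metis add.commute div_mult_self2 zero_neq_numeral)
  qed
  ultimately show ?thesis
    unfolding s by (simp add: phase_avg_Suc[of \<theta> K "u + c"] add.assoc)
qed

text \<open>A path p < 2^k lists the next k digits of n, least significant first; v holds the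
  corresponding digits of t.\<close>
fun path_state :: "nat \<Rightarrow> nat \<Rightarrow> digit_state \<Rightarrow> nat \<Rightarrow> digit_state" where
  "path_state 0 v s p = s"
| "path_state (Suc k) v s p = path_state k (v div 2) (state_step (v mod 2) s (p mod 2)) (p div 2)"

fun path_phase :: "nat \<Rightarrow> nat \<Rightarrow> digit_state \<Rightarrow> nat \<Rightarrow> int" where
  "path_phase 0 v s p = 0"
| "path_phase (Suc k) v s p =
    state_phase (v mod 2) s (p mod 2)
    + path_phase k (v div 2) (state_step (v mod 2) s (p mod 2)) (p div 2)"

lemma state_avg_add:
  "state_avg \<theta> (K + k) u s =
    (\<Sum>p<2 ^ k. phase \<theta> (path_phase k u s p)
      * state_avg \<theta> K (u div 2 ^ k) (path_state k u s p)) / 2 ^ k"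
proof (induction k arbitrary: u s)
  case 0
  then show ?case by simp
next
  case (Suc k)
  let ?s = "\<lambda>e. state_step (u mod 2) s e"
  let ?w = "\<lambda>e. phase \<theta> (state_phase (u mod 2) s e)"
  let ?h = "\<lambda>e q. phase \<theta> (path_phase k (u div 2) (?s e) q)
    * state_avg \<theta> K (u div 2 ^ Suc k) (path_state k (u div 2) (?s e) q)"
  let ?g = "\<lambda>p. phase \<theta> (path_phase (Suc k) u s p)
    * state_avg \<theta> K (u div 2 ^ Suc k) (path_state (Suc k) u s p)"
  have "u div 2 div 2 ^ k = u div 2 ^ Suc k" by (simp add: div_mult2_eq)
  then have "state_avg \<theta> (K + Suc k) u s
      = (?w 0 * ((\<Sum>q<2 ^ k. ?h 0 q) / 2 ^ k) + ?w 1 * ((\<Sum>q<2 ^ k. ?h 1 q) / 2 ^ k)) / 2"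
    using state_avg_Suc[of \<theta> "K + k" u s] by (simp add: Suc.IH sum_lessThan_2)
  also have "\<dots> = (\<Sum>q<2 ^ k. ?w 0 * ?h 0 q + ?w 1 * ?h 1 q) / 2 ^ Suc k"
    by (simp add: sum.distrib sum_distrib_left field_simps)
  also have "(\<Sum>q<2 ^ k. ?w 0 * ?h 0 q + ?w 1 * ?h 1 q) = (\<Sum>q<2 ^ k. ?g (2 * q) + ?g (2 * q + 1))"
    by (simp add: phase_add mult.assoc)
  also have "\<dots> = (\<Sum>p<2 ^ Suc k. ?g p)"
    using sum_lessThan_double[of ?g "2 ^ k"] by simp
  finally show ?case .
qed

lemma binary_state_path_state: "binary_state s \<Longrightarrow> binary_state (path_state k v s p)"
proof (induction k arbitrary: v s p)
  case (Suc k)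
  moreover have "binary_state (state_step (v mod 2) s (p mod 2))"
    using Suc.prems by (cases s) auto
  ultimately show ?case by simp
qed simp

lemma mod_double_div_2: "(v::nat) mod (2 * q) div 2 = v div 2 mod q"
  using mod_mult2_eq[of v 2 q] by simp

lemma path_state_mod: "path_state k v s p = path_state k (v mod 2 ^ k) s p"
  by (induction k arbitrary: v s p) (simp_all add: mod_double_div_2 mod_mod_cancel)

lemma path_phase_mod: "path_phase k v s p = path_phase k (v mod 2 ^ k) s p"
  by (induction k arbitrary: v s p) (simp_all add: mod_double_div_2 mod_mod_cancel)

definition collision :: "nat \<Rightarrow> digit_state \<Rightarrow> nat \<Rightarrow> nat \<Rightarrow> bool" where
  "collision v s p q \<longleftrightarrow>
    p \<noteq> q \<and> path_state 4 v s p = path_state 4 v s q \<and> path_phase 4 v s q = path_phase 4 v s p + 1"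

text \<open>Entry 8 v + 4 c + 2 a + b is a colliding pair of paths for the digits v and the
  state (c, a, b), found by exhaustive search; rows for v without a change of digit are unused.\<close>
definition collision_table :: "(nat \<times> nat) list" where
  "collision_table = [
     (0, 1), (0, 1), (0, 1), (0, 1), (0, 1), (0, 1), (0, 1), (0, 1),
     (0, 2), (0, 2), (0, 2), (0, 2), (0, 1), (0, 4), (0, 4), (0, 1),
     (0, 1), (0, 4), (0, 4), (0, 1), (0, 4), (0, 4), (0, 4), (0, 4),
     (0, 1), (0, 1), (0, 1), (0, 1), (0, 1), (0, 1), (0, 1), (0, 1),
     (0, 1), (0, 1), (0, 1), (0, 1), (0, 1), (0, 1), (0, 1), (0, 1),
     (0, 1), (3, 5), (3, 5), (1, 0), (0, 1), (11, 12), (10, 13), (0, 1),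
     (0, 1), (11, 12), (10, 13), (0, 1), (1, 4), (1, 2), (1, 2), (1, 5),
     (0, 1), (0, 1), (0, 1), (0, 1), (0, 1), (0, 1), (0, 1), (0, 1),
     (0, 1), (0, 1), (0, 1), (0, 1), (0, 1), (0, 1), (0, 1), (0, 1),
     (0, 2), (0, 2), (0, 2), (0, 2), (0, 1), (0, 2), (0, 2), (0, 1),
     (0, 1), (0, 2), (0, 2), (0, 1), (6, 5), (1, 0), (1, 0), (5, 6),
     (0, 1), (0, 1), (0, 1), (0, 1), (0, 1), (0, 1), (0, 1), (0, 1),
     (0, 1), (0, 1), (0, 1), (0, 1), (0, 1), (0, 1), (0, 1), (0, 1),
     (0, 1), (3, 5), (3, 5), (1, 0), (0, 1), (3, 6), (6, 2), (0, 1),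
     (0, 1), (3, 6), (6, 2), (0, 1), (1, 4), (1, 2), (1, 2), (1, 6),
     (0, 1), (0, 1), (0, 1), (0, 1), (0, 1), (0, 1), (0, 1), (0, 1)]"

lemma collision_table_correct:
  "list_all (\<lambda>v. odd v \<noteq> odd (v div 2) \<longrightarrow> list_all (\<lambda>c. list_all (\<lambda>a. list_all (\<lambda>b.
     case collision_table ! (8 * v + 4 * c + 2 * a + b) of
       (p, q) \<Rightarrow> p < 16 \<and> q < 16 \<and> collision v (c, a, b) p q)
     [0, 1]) [0, 1]) [0, 1]) [0..<16]"
  unfolding collision_table_def collision_def by code_simp

lemma collision_exists:
  assumes "v < 16" "odd v \<noteq> odd (v div 2)" "binary_state s"
  obtains p q where "p < 16" "q < 16" "collision v s p q"
proof -
  obtain c a b where s: "s = (c, a, b)" "c \<le> 1" "a \<le> 1" "b \<le> 1"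
    using assms(3) by (cases s) auto
  then have "v \<in> set [0..<16]" "c \<in> set [0, 1]" "a \<in> set [0, 1]" "b \<in> set [0, 1]"
    using assms(1) by auto
  from collision_table_correct[unfolded list_all_iff, rule_format, OF this(1) assms(2) this(2-4)]
  have "case collision_table ! (8 * v + 4 * c + 2 * a + b) of
      (p, q) \<Rightarrow> p < 16 \<and> q < 16 \<and> collision v (c, a, b) p q" .
  then show ?thesis
    using that s(1) by (auto split: prod.splits)
qed

section \<open>Decay of the digit averages\<close>

lemma norm_state_avg_le_1: "norm (state_avg \<theta> K u s) \<le> 1"
proof -
  obtain c a b where s: "s = (c, a, b)" by (cases s)
  have "norm (\<Sum>n<2 ^ K. phase \<theta> (r11_diff (u + c) a b n)) \<le> 2 ^ K"
    by (rule order_trans[OF norm_sum]) simp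
  then show ?thesis
    unfolding s by (simp add: phase_avg_def norm_divide norm_power)
qed

lemma norm_state_avg_Suc_le:
  assumes "binary_state s"
    and bound: "\<And>s'. binary_state s' \<Longrightarrow> norm (state_avg \<theta> K (u div 2) s') \<le> M"
  shows "norm (state_avg \<theta> (Suc K) u s) \<le> M"
proof -
  let ?f = "\<lambda>e. phase \<theta> (state_phase (u mod 2) s e)
    * state_avg \<theta> K (u div 2) (state_step (u mod 2) s e)"
  have "norm (\<Sum>e<2. ?f e) \<le> (\<Sum>e<(2::nat). M)"
  proof (rule order_trans[OF norm_sum sum_mono])
    fix e :: nat
    assume "e \<in> {..<2}"
    then have "binary_state (state_step (u mod 2) s e)"
      using assms(1) by (cases s) auto
    then show "norm (?f e) \<le> M"
      using bound by (simp add: norm_mult)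
  qed
  then show ?thesis
    by (simp add: state_avg_Suc norm_divide)
qed

lemma norm_state_avg_window_le:
  assumes "\<bar>\<theta>\<bar> \<le> pi" "binary_state s" "odd u \<noteq> odd (u div 2)"
    and bound: "\<And>s'. binary_state s' \<Longrightarrow> norm (state_avg \<theta> K (u div 16) s') \<le> M"
  shows "norm (state_avg \<theta> (K + 4) u s) \<le> (1 - \<theta>\<^sup>2 / 128) * M"
proof -
  have "u mod 16 div 2 = u div 2 mod 8"
    using mod_double_div_2[of u 8] by simp
  then have "odd (u mod 16) \<noteq> odd (u mod 16 div 2)"
    using assms(3) by (simp add: dvd_mod_iff)
  then obtain p q where "p < 16" "q < 16" "collision (u mod 16) s p q"
    using collision_exists[of "u mod 16" s] assms(2) by auto
  then have pq: "p < 16" "q < 16" "p \<noteq> q" "path_state 4 u s p = path_state 4 u s q"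
      "path_phase 4 u s q = path_phase 4 u s p + 1"
    using path_state_mod[of 4 u] path_phase_mod[of 4 u] unfolding collision_def by simp_all
  have avg_eq: "state_avg \<theta> (K + 4) u s
      = (\<Sum>p<16. phase \<theta> (path_phase 4 u s p) * state_avg \<theta> K (u div 16) (path_state 4 u s p)) / 16"
    using state_avg_add[of \<theta> K 4 u s] by simp
  have "norm (\<Sum>p<16. phase \<theta> (path_phase 4 u s p) * state_avg \<theta> K (u div 16) (path_state 4 u s p))
      \<le> (card {..<16::nat} - \<theta>\<^sup>2 / 8) * M"
    by (rule norm_sum_phase_collision_le[of _ p q])
      (use pq bound binary_state_path_state assms in auto)
  then show ?thesis
    unfolding avg_eq norm_divide by (simp add: field_simps)
qed

lemma norm_state_avg_le:
  assumes "\<bar>\<theta>\<bar> \<le> pi" "binary_state s"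
  shows "norm (state_avg \<theta> K u s) \<le> (1 - \<theta>\<^sup>2 / 128) ^ window_count K u"
  using assms(2)
proof (induction K u arbitrary: s rule: window_count.induct)
  case (1 K u)
  consider "K < 4" | "\<not> K < 4" "odd u \<noteq> odd (u div 2)" | "\<not> K < 4" "\<not> odd u \<noteq> odd (u div 2)"
    by blast
  then show ?case
  proof cases
    case 1
    then show ?thesis using norm_state_avg_le_1 by (simp add: window_count.simps)
  next
    case 2
    then have "K = (K - 4) + 4" by simp
    then show ?thesis
      using norm_state_avg_window_le[OF assms(1) "1.prems" 2(2) "1.IH"(1)[OF 2]] 2
      by (simp add: window_count.simps)
  next
    case 3
    then have "K = Suc (K - 1)" by simp
    then show ?thesis
      using norm_state_avg_Suc_le[OF "1.prems" "1.IH"(2)[OF 3]] 3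
      by (simp add: window_count.simps)
  qed
qed

lemma norm_phase_avg_le:
  assumes "\<bar>\<theta>\<bar> \<le> pi" "16 * t < 2 ^ K"
  shows "norm (phase_avg \<theta> K t 0 0) \<le> (1 - \<theta>\<^sup>2 / 128) ^ (blocks01 t div 2)"
proof -
  have "0 \<le> 1 - \<theta>\<^sup>2 / 128" using power2_le_16_if_abs_le_pi[OF assms(1)] by simp
  then have "(1 - \<theta>\<^sup>2 / 128) ^ window_count K t \<le> (1 - \<theta>\<^sup>2 / 128) ^ (blocks01 t div 2)"
    by (intro power_decreasing blocks01_div2_le_window_count[OF assms(2)]) auto
  then show ?thesis
    using norm_state_avg_le[OF assms(1), of "(0, 0, 0)" K t] by simp
qed

section \<open>Approximation of gamma_t\<close>

lemma r11_diff_mod_if_no_carry: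
  "n mod 2 ^ K + t < 2 ^ K \<Longrightarrow> r11_diff t a b n = r11_diff t a b (n mod 2 ^ Suc K)"
proof (induction K arbitrary: t a b n)
  case 0
  then show ?case by (simp add: r11_diff_def)
next
  case (Suc K)
  define m where "m = n div 2"
  define e where "e = n mod 2"
  have "e \<le> 1" unfolding e_def by simp
  have n: "n = 2 * m + e" unfolding m_def e_def by simp
  have n_mod: "n mod 2 ^ Suc (Suc K) = 2 * (m mod 2 ^ Suc K) + e"
    "n mod 2 ^ Suc K = 2 * (m mod 2 ^ K) + e"
    unfolding m_def e_def using mod_mult2_eq[of n 2 "2 ^ Suc K"] mod_mult2_eq[of n 2 "2 ^ K"]
    by (simp_all add: mult.commute)
  have carry: "m mod 2 ^ K + (t + e) div 2 < 2 ^ K"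
    using Suc.prems n_mod(2) by simp
  let ?w = "int a * int ((t + e) mod 2) - int b * int e"
  have "r11_diff t a b n = r11_diff ((t + e) div 2) ((t + e) mod 2) e m + ?w"
    unfolding n by (rule r11_diff_double_plus[OF \<open>e \<le> 1\<close>])
  also have "\<dots> = r11_diff ((t + e) div 2) ((t + e) mod 2) e (m mod 2 ^ Suc K) + ?w"
    using Suc.IH[OF carry] by simp
  also have "\<dots> = r11_diff t a b (2 * (m mod 2 ^ Suc K) + e)"
    by (rule r11_diff_double_plus[OF \<open>e \<le> 1\<close>, symmetric])
  finally show ?case
    unfolding n_mod(1) .
qed

lemma dd_eq_mod_if_no_carry:
  "n mod 2 ^ K + t < 2 ^ K \<Longrightarrow> dd t n = dd t (n mod 2 ^ Suc K)"
  unfolding dd_eq_r11_diff by (rule r11_diff_mod_if_no_carry)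

lemma count_below_carry_le: "count_below (\<lambda>n. 2 ^ K \<le> n mod 2 ^ K + t) (2 ^ Suc K) \<le> 2 * t"
proof -
  let ?B = "\<lambda>n. 2 ^ K \<le> n mod 2 ^ K + t"
  have "count_below ?B (2 * 2 ^ K + 0) = 2 * count_below ?B (2 ^ K) + count_below ?B 0"
    by (rule count_below_periodic) simp
  moreover have "count_below ?B (2 ^ K) \<le> card {2 ^ K - t..<(2::nat) ^ K}"
    unfolding count_below_def by (rule card_mono) auto
  ultimately show ?thesis by (simp add: count_below_def)
qed

text \<open>Since cdens is defined by lim, it is meaningful only once the frequencies converge.\<close>
lemma tendsto_density_dd: "(\<lambda>M. count_below (\<lambda>n. dd t n = k) M / M) \<longlonglongrightarrow> cdens t k"
proof -
  have "convergent (\<lambda>M. count_below (\<lambda>n. dd t n = k) M / M)"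
  proof (rule convergent_density_if_periodic_approx)
    fix \<eta> :: real
    assume "0 < \<eta>"
    obtain K :: nat where K: "t / \<eta> < 2 ^ K"
      using real_arch_pow[of 2 "t / \<eta>"] by auto
    let ?q = "2 ^ Suc K :: nat"
    let ?B = "\<lambda>n. 2 ^ K \<le> n mod 2 ^ K + t"
    have "count_below ?B ?q / ?q \<le> 2 * t / ?q"
      using count_below_carry_le[of K t] by (intro divide_right_mono) simp_all
    also have "\<dots> < \<eta>"
      using K \<open>0 < \<eta>\<close> by (simp add: field_simps)
    finally have small: "count_below ?B ?q / ?q < \<eta>" .
    have periodic: "\<forall>n. (dd t (n mod ?q mod ?q) = k) = (dd t (n mod ?q) = k) \<and> ?B (n mod ?q) = ?B n"
      by (simp add: mod_mod_cancel)
    have agree: "\<forall>n. \<not> ?B n \<longrightarrow> (dd t n = k \<longleftrightarrow> dd t (n mod ?q) = k)"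
      using dd_eq_mod_if_no_carry[of _ K t] by (metis not_le)
    have "0 < ?q" by simp
    show "\<exists>q Q B. 0 < q \<and> (\<forall>n. Q (n mod q) = Q n \<and> B (n mod q) = B n)
        \<and> (\<forall>n. \<not> B n \<longrightarrow> (dd t n = k \<longleftrightarrow> Q n)) \<and> count_below B q / q < \<eta>"
      by (rule exI[of _ ?q], rule exI[of _ "\<lambda>n. dd t (n mod ?q) = k"], rule exI[of _ ?B])
        (use \<open>0 < ?q\<close> periodic agree small in blast)
  qed
  then show ?thesis
    by (simp add: cdens_def count_below_def convergent_LIMSEQ_iff)
qed

lemma norm_gamma_t_diff_phase_avg_le:
  "norm (gamma_t t \<theta> - phase_avg \<theta> (Suc K) t 0 0) \<le> 2 * real t / 2 ^ K"
proof -
  let ?q = "2 ^ Suc K :: nat"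
  let ?B = "\<lambda>n. 2 ^ K \<le> n mod 2 ^ K + t"
  have "gamma_t t \<theta> = (\<Sum>\<^sub>\<infinity>k. complex_of_real (cdens t k) * phase \<theta> k)"
    unfolding gamma_t_def phase_def ..
  moreover have "phase_avg \<theta> (Suc K) t 0 0 = (\<Sum>n<?q. phase \<theta> (dd t (n mod ?q))) / ?q"
    unfolding phase_avg_def dd_eq_r11_diff by simp
  moreover have "norm ((\<Sum>\<^sub>\<infinity>k. complex_of_real (cdens t k) * phase \<theta> k)
      - (\<Sum>n<?q. phase \<theta> (dd t (n mod ?q))) / ?q) \<le> 2 * count_below ?B ?q / ?q"
  proof (rule norm_infsum_density_phase_diff_le[where f = "dd t"])
    show "dd t n = dd t (n mod ?q)" if "\<not> ?B n" for n
      using that by (intro dd_eq_mod_if_no_carry) simp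
  qed (simp_all add: mod_mod_cancel tendsto_density_dd)
  moreover have "2 * count_below ?B ?q / ?q \<le> 2 * real t / 2 ^ K"
    using count_below_carry_le[of K t] by (simp add: field_simps)
  ultimately show ?thesis by simp
qed

theorem proposition3p10:
  fixes t :: nat and \<theta> :: real
  assumes "\<bar>\<theta>\<bar> \<le> pi"
  shows "cmod (gamma_t t \<theta>) \<le> (1 - \<theta>\<^sup>2 / 128) ^ (blocks01 t div 2)"
proof (rule field_le_epsilon)
  fix \<epsilon> :: real
  assume "0 < \<epsilon>"
  obtain K :: nat where K: "max (2 * real t / \<epsilon>) (16 * real t) < 2 ^ K"
    using real_arch_pow[of 2 "max (2 * real t / \<epsilon>) (16 * real t)"] by auto
  then have "real (16 * t) < real ((2::nat) ^ K)" "2 * real t / 2 ^ K \<le> \<epsilon>"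
    using \<open>0 < \<epsilon>\<close> by (simp_all add: field_simps)
  then have "16 * t < (2::nat) ^ Suc K"
    unfolding of_nat_less_iff by simp
  have "cmod (gamma_t t \<theta>) \<le> cmod (phase_avg \<theta> (Suc K) t 0 0) + 2 * real t / 2 ^ K"
    using norm_gamma_t_diff_phase_avg_le[of t \<theta> K]
      norm_triangle_ineq2[of "gamma_t t \<theta>" "phase_avg \<theta> (Suc K) t 0 0"]
    by linarith
  also have "\<dots> \<le> (1 - \<theta>\<^sup>2 / 128) ^ (blocks01 t div 2) + \<epsilon>"
    using norm_phase_avg_le[OF assms \<open>16 * t < 2 ^ Suc K\<close>] \<open>2 * real t / 2 ^ K \<le> \<epsilon>\<close> by linarith
  finally show "cmod (gamma_t t \<theta>) \<le> (1 - \<theta>\<^sup>2 / 128) ^ (blocks01 t div 2) + \<epsilon>" .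
qed

end
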